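(* Let $X=\{1,\dots,n\}$, $Y$ finite, $Q$ a symmetric irreducible stochastic matrix on $Y$ (notation in context). Let $1\le k\le n-1$, let $\underline a=(a_0,\dots,a_m)$ be a type with $a_0+\cdots+a_m=k+1$ and $a_0\ge1$, $\underline a'=(a_0-1,a_1,\dots,a_m)$, $A\subseteq X$ with $|A|=k$, and $F\in P_{k,\underline a',A}$. Then $$D_{k+1,\underline a}D^*_{k+1,\underline a}F=|Y|(n-k)\,F+Q_kF.$$
   Context: $Q$ acts on $L(Y)$ by $(Qf)(y)=\sum_{y'}q(y,y')f(y')$, with distinct eigenvalues $\lambda_0=1,\dots,\lambda_m$ and eigenspaces $W_0$ (constants), $W_1,\dots,W_m$; $\sum_yf(y)=0$ for $f\in W_j$, $j\ge1$. $\Theta_k$: functions $\theta$ with $\mathrm{dom}(\theta)$ a $k$-subset of $X$ and values in $Y$; $\varphi\subseteq\theta$ means $\mathrm{dom}\varphi\subseteq\mathrm{dom}\theta$ and $\theta|_{\mathrm{dom}\varphi}=\varphi$. $D_k:L(\Theta_k)\to L(\Theta_{k-1})$, $(D_kF)(\varphi)=\sum_{\theta\supseteq\varphi}F(\theta)$; $D_k^*:L(\Theta_{k-1})\to L(\Theta_k)$, $(D_k^*F)(\theta)=\sum_{\varphi\subseteq\theta}F(\varphi)$. Types $\underline a=(a_0,\dots,a_m)$, $\ell(\underline a)=a_1+\cdots+a_m$. A fundamental function of type $\underline b$ on a $k$-set $A$ is $F=\bigotimes_{j\in A}F^j$ ($F(\theta)=\prod_{j\in A}F^j(\theta(j))$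 on $Y^A$, $0$ elsewhere) with each $F^j$ in some $W_{i_j}$ and exactly $b_i$ indices $j$ with $i_j=i$; $P_{k,\underline b,A}$ is their span and $P_{k,\underline b}=\bigoplus_AP_{k,\underline b,A}$. $D_{k+1,\underline a}$ is $D_{k+1}$ restricted to $P_{k+1,\underline a}$ and $D^*_{k+1,\underline a}$ is $D^*_{k+1}$ restricted to $P_{k,\underline a'}$. The operator $Q_k$ on $L(\Theta_k)$ is defined on a fundamental function $F=\bigotimes_{j\in A}F^j$ and extended linearly: for $\theta\in\Theta_k$ with $|\mathrm{dom}\theta\cap A|=k-1$, $A\setminus\mathrm{dom}\theta=\{i\}$, $\mathrm{dom}\theta\setminus A=\{i_0\}$, $(Q_kF)(\theta)=|Y|F(\bar\theta)$ if $F^i\in W_0$ and $0$ if $F^i\notin W_0$, where $\bar\theta\in Y^A$ agrees with $\theta$ on $A\setminus\{i\}$ and $\bar\theta(i)=\theta(i_0)$; for all other $\theta$, $(Q_kF)(\theta)=0$. *)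

theory Defs
  imports Complex_Main
begin

definition Qop :: "('y::finite \<Rightarrow> 'y \<Rightarrow> real) \<Rightarrow> ('y \<Rightarrow> real) \<Rightarrow> 'y \<Rightarrow> real" where
  "Qop Q f y = (\<Sum>y'\<in>UNIV. Q y y' * f y')"

definition stochastic :: "('y::finite \<Rightarrow> 'y \<Rightarrow> real) \<Rightarrow> bool" where
  "stochastic Q \<longleftrightarrow> (\<forall>x y. 0 \<le> Q x y) \<and> (\<forall>x. (\<Sum>y\<in>UNIV. Q x y) = 1)"

definition irreducible_mat :: "('y::finite \<Rightarrow> 'y \<Rightarrow> real) \<Rightarrow> bool" where
  "irreducible_mat Q \<longleftrightarrow> (\<forall>x y. (x, y) \<in> {(u, v). 0 < Q u v}\<^sup>*)"

definition is_eigenvalue :: "('y::finite \<Rightarrow> 'y \<Rightarrow> real) \<Rightarrow> real \<Rightarrow> bool" where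
  "is_eigenvalue Q \<mu> \<longleftrightarrow> (\<exists>f. f \<noteq> (\<lambda>_. 0) \<and> Qop Q f = (\<lambda>y. \<mu> * f y))"

definition eigen_enum :: "('y::finite \<Rightarrow> 'y \<Rightarrow> real) \<Rightarrow> (nat \<Rightarrow> real) \<Rightarrow> nat \<Rightarrow> bool" where
  "eigen_enum Q lam m \<longleftrightarrow> lam 0 = 1 \<and> inj_on lam {..m} \<and> lam ` {..m} = {\<mu>. is_eigenvalue Q \<mu>}"

definition eigsp :: "('y::finite \<Rightarrow> 'y \<Rightarrow> real) \<Rightarrow> (nat \<Rightarrow> real) \<Rightarrow> nat \<Rightarrow> ('y \<Rightarrow> real) set" where
  "eigsp Q lam i = {f. Qop Q f = (\<lambda>y. lam i * f y)}"

definition Theta :: "nat \<Rightarrow> nat \<Rightarrow> (nat \<rightharpoonup> 'y) set" where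
  "Theta n k = {\<theta>. dom \<theta> \<subseteq> {1..n} \<and> card (dom \<theta>) = k}"

definition D :: "nat \<Rightarrow> nat \<Rightarrow> ((nat \<rightharpoonup> 'y) \<Rightarrow> real) \<Rightarrow> (nat \<rightharpoonup> 'y) \<Rightarrow> real" where
  "D n k F \<phi> = (\<Sum>\<theta>\<in>{\<theta>\<in>Theta n k. \<phi> \<subseteq>\<^sub>m \<theta>}. F \<theta>)"

definition Dstar :: "nat \<Rightarrow> nat \<Rightarrow> ((nat \<rightharpoonup> 'y) \<Rightarrow> real) \<Rightarrow> (nat \<rightharpoonup> 'y) \<Rightarrow> real" where
  "Dstar n k F \<theta> = (\<Sum>\<phi>\<in>{\<phi>\<in>Theta n (k - 1). \<phi> \<subseteq>\<^sub>m \<theta>}. F \<phi>)"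

definition tensor :: "nat set \<Rightarrow> (nat \<Rightarrow> 'y \<Rightarrow> real) \<Rightarrow> (nat \<rightharpoonup> 'y) \<Rightarrow> real" where
  "tensor A G \<theta> = (if dom \<theta> = A then (\<Prod>j\<in>A. G j (the (\<theta> j))) else 0)"

definition fundamental :: "('y::finite \<Rightarrow> 'y \<Rightarrow> real) \<Rightarrow> (nat \<Rightarrow> real) \<Rightarrow> nat \<Rightarrow> nat set
    \<Rightarrow> (nat \<Rightarrow> nat) \<Rightarrow> (nat \<Rightarrow> 'y \<Rightarrow> real) \<Rightarrow> bool" where
  "fundamental Q lam m A b G \<longleftrightarrow>
     (\<exists>idx :: nat \<Rightarrow> nat. (\<forall>j\<in>A. idx j \<le> m \<and> G j \<in> eigsp Q lam (idx j))
        \<and> (\<forall>i\<le>m. card {j\<in>A. idx j = i} = b i))"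

definition Qk :: "('y::finite \<Rightarrow> 'y \<Rightarrow> real) \<Rightarrow> (nat \<Rightarrow> real) \<Rightarrow> nat \<Rightarrow> nat set
    \<Rightarrow> (nat \<Rightarrow> 'y \<Rightarrow> real) \<Rightarrow> (nat \<rightharpoonup> 'y) \<Rightarrow> real" where
  "Qk Q lam k A G \<theta> =
     (if card (dom \<theta> \<inter> A) = k - 1 then
        (let i = the_elem (A - dom \<theta>); i0 = the_elem (dom \<theta> - A);
             \<theta>bar = (\<theta> |` (A - {i}))(i \<mapsto> the (\<theta> i0))
         in if G i \<in> eigsp Q lam 0 then real (card (UNIV :: 'y set)) * tensor A G \<theta>bar else 0)
      else 0)"

end

theory Submission imports Defs begin

text \<open>
  Since \<open>F\<close> is supported on \<open>Y\<^sup>A\<close>, the inner sum of \<open>D D* F\<close> at a \<open>(k+1)\<close>-function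
  \<open>\<eta>\<close> has a single surviving term, \<open>F (\<eta>|\<^sub>A)\<close>, present iff \<open>A \<subseteq> dom \<eta>\<close>. The \<open>\<eta> \<supseteq> \<theta>\<close> are the
  one-point extensions \<open>\<theta>(j \<mapsto> y)\<close> with \<open>j \<notin> dom \<theta>\<close>, so everything depends on how
  \<open>dom \<theta>\<close> sits relative to \<open>A\<close>. If \<open>dom \<theta> = A\<close>, each of the \<open>(n - k) |Y|\<close> extensions
  contributes \<open>F \<theta>\<close>. If \<open>A - dom \<theta> = {i}\<close>, only \<open>j = i\<close> contributes, and summing a
  fundamental function over its \<open>i\<close>-th coordinate gives \<open>|Y|\<close> times the (constant) factor
  \<open>F\<^sup>i\<close> if \<open>F\<^sup>i \<in> W\<^sub>0\<close> and \<open>0\<close> otherwise, because eigenvectors of the symmetric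
  stochastic \<open>Q\<close> for an eigenvalue \<open>\<noteq> 1\<close> have sum zero: this is \<open>Q\<^sub>k F\<close>. Otherwise
  nothing contributes, and \<open>F \<theta> = Q\<^sub>k F \<theta> = 0\<close>.
\<close>

section \<open>Spectral facts about Q\<close>

lemma stochastic_fixed_point_constant:
  fixes Q :: "'y::finite \<Rightarrow> 'y \<Rightarrow> real"
  assumes st: "stochastic Q" and irr: "irreducible_mat Q" and fix_f: "Qop Q f = f"
  shows "f x = f z"
proof -
  define M where "M = Max (range f)"
  obtain x0 where x0: "f x0 = M"
    unfolding M_def by (metis Max_in UNIV_not_empty finite_UNIV finite_imageI imageE image_is_empty)
  have le_M: "f y \<le> M" for y
    unfolding M_def by simp
  \<comment> \<open>Maximum principle: an average of values \<open>\<le> M\<close> equal to \<open>M\<close> forces every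
      successor to attain \<open>M\<close>; irreducibility then spreads \<open>M\<close> everywhere.\<close>
  have step: "f v = M" if "f u = M" "0 < Q u v" for u v
  proof -
    have "(\<Sum>y\<in>UNIV. Q u y * (M - f y)) = M * (\<Sum>y\<in>UNIV. Q u y) - Qop Q f u"
      by (simp add: Qop_def algebra_simps sum_subtractf sum_distrib_left)
    also have "\<dots> = 0"
      using st fix_f that(1) by (simp add: stochastic_def)
    finally have "\<forall>y\<in>UNIV. Q u y * (M - f y) = 0"
      using st le_M by (subst sum_nonneg_eq_0_iff[symmetric]) (auto simp: stochastic_def)
    with that(2) show ?thesis by force
  qed
  have "f y = M" for y
  proof -
    have "(x0, y) \<in> {(u, v). 0 < Q u v}\<^sup>*"
      using irr by (simp add: irreducible_mat_def)
    then show ?thesis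
      by (induction rule: rtrancl_induct) (use x0 step in auto)
  qed
  then show ?thesis by simp
qed

lemma eigenvector_sum_eq_0:
  fixes Q :: "'y::finite \<Rightarrow> 'y \<Rightarrow> real"
  assumes sym: "\<forall>x y. Q x y = Q y x" and st: "stochastic Q"
    and eigv: "Qop Q f = (\<lambda>y. \<mu> * f y)" and "\<mu> \<noteq> 1"
  shows "(\<Sum>y\<in>UNIV. f y) = 0"
proof -
  have "\<mu> * (\<Sum>y\<in>UNIV. f y) = (\<Sum>y\<in>UNIV. Qop Q f y)"
    by (simp add: eigv sum_distrib_left)
  also have "\<dots> = (\<Sum>y\<in>UNIV. \<Sum>y'\<in>UNIV. Q y y' * f y')"
    by (simp add: Qop_def)
  also have "\<dots> = (\<Sum>y'\<in>UNIV. f y' * (\<Sum>y\<in>UNIV. Q y' y))"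
    by (subst sum.swap) (simp add: sum_distrib_left sym mult.commute)
  also have "\<dots> = (\<Sum>y\<in>UNIV. f y)"
    using st by (simp add: stochastic_def)
  finally have "(\<mu> - 1) * (\<Sum>y\<in>UNIV. f y) = 0"
    by (simp add: algebra_simps)
  with \<open>\<mu> \<noteq> 1\<close> show ?thesis by simp
qed

lemma sum_eigsp:
  fixes Q :: "'y::finite \<Rightarrow> 'y \<Rightarrow> real"
  assumes sym: "\<forall>x y. Q x y = Q y x" and st: "stochastic Q" and irr: "irreducible_mat Q"
    and eig: "eigen_enum Q lam m" and "i \<le> m" and f: "f \<in> eigsp Q lam i"
  shows "(\<Sum>y\<in>UNIV. f y) = (if f \<in> eigsp Q lam 0 then real (card (UNIV :: 'y set)) * f z else 0)"
proof (cases "f \<in> eigsp Q lam 0")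
  case True
  then have "Qop Q f = f"
    using eig by (simp add: eigsp_def eigen_enum_def)
  then have "f y = f z" for y
    by (rule stochastic_fixed_point_constant[OF st irr])
  then have "(\<Sum>y\<in>UNIV. f y) = (\<Sum>y\<in>(UNIV :: 'y set). f z)"
    by (intro sum.cong) auto
  then show ?thesis
    using True by simp
next
  case False
  with f have "i \<noteq> 0" by metis
  with eig \<open>i \<le> m\<close> have "lam i \<noteq> 1"
    unfolding eigen_enum_def by (metis atMost_iff inj_on_contraD zero_le)
  with f False show ?thesis
    using eigenvector_sum_eq_0[OF sym st] by (simp add: eigsp_def)
qed

section \<open>One-point extensions\<close>

lemma finite_Theta: "finite (Theta n k :: (nat \<rightharpoonup> 'y::finite) set)"
proof -
  have "Theta n k \<subseteq> (\<Union>S\<in>Pow {1..n}. {m :: nat \<rightharpoonup> 'y. dom m = S \<and> ran m \<subseteq> UNIV})"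
    unfolding Theta_def by auto
  moreover have "finite (\<Union>S\<in>Pow {1..n}. {m :: nat \<rightharpoonup> 'y. dom m = S \<and> ran m \<subseteq> UNIV})"
    by (intro finite_UN_I finite_Pow_iff[THEN iffD2] finite_set_of_finite_maps)
      (auto dest: finite_subset)
  ultimately show ?thesis by (rule finite_subset)
qed

lemma finite_dom_Theta: "\<theta> \<in> Theta n k \<Longrightarrow> finite (dom \<theta>)"
  unfolding Theta_def by (auto intro: finite_subset)

lemma map_le_eq_fun_upd:
  assumes "\<theta> \<subseteq>\<^sub>m \<eta>" and "dom \<eta> = insert j (dom \<theta>)"
  shows "\<eta> = \<theta>(j \<mapsto> the (\<eta> j))"
proof
  fix x
  show "\<eta> x = (\<theta>(j \<mapsto> the (\<eta> j))) x"
  proof (cases "x = j")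
    case True
    have "j \<in> dom \<eta>"
      using assms(2) by simp
    with True show ?thesis by auto
  next
    case False
    with assms show ?thesis
      unfolding map_le_def by (cases "x \<in> dom \<theta>") auto
  qed
qed

lemma Theta_Suc_supersets:
  assumes \<theta>: "\<theta> \<in> Theta n k"
  shows "{\<eta>\<in>Theta n (k + 1). \<theta> \<subseteq>\<^sub>m \<eta>} = (\<lambda>(j, y). \<theta>(j \<mapsto> y)) ` (({1..n} - dom \<theta>) \<times> UNIV)"
proof (intro equalityI subsetI)
  fix \<eta> assume "\<eta> \<in> {\<eta>\<in>Theta n (k + 1). \<theta> \<subseteq>\<^sub>m \<eta>}"
  then have \<eta>: "\<eta> \<in> Theta n (k + 1)" and le: "\<theta> \<subseteq>\<^sub>m \<eta>" by auto
  have sub: "dom \<theta> \<subseteq> dom \<eta>"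
    using le by (rule map_le_implies_dom_le)
  have "card (dom \<eta> - dom \<theta>) = 1"
    using \<theta> \<eta> sub finite_dom_Theta[OF \<theta>] by (simp add: card_Diff_subset Theta_def)
  then obtain j where j: "dom \<eta> - dom \<theta> = {j}"
    by (auto simp: card_1_singleton_iff)
  then have "dom \<eta> = insert j (dom \<theta>)"
    using sub by blast
  then have eq: "\<eta> = (\<lambda>(j, y). \<theta>(j \<mapsto> y)) (j, the (\<eta> j))"
    unfolding prod.case by (rule map_le_eq_fun_upd[OF le])
  have "j \<in> {1..n} - dom \<theta>"
    using j \<eta> unfolding Theta_def by blast
  then show "\<eta> \<in> (\<lambda>(j, y). \<theta>(j \<mapsto> y)) ` (({1..n} - dom \<theta>) \<times> UNIV)"
    by (intro rev_image_eqI[of "(j, the (\<eta> j))" _ \<eta> "\<lambda>(j, y). \<theta>(j \<mapsto> y)", OF _ eq]) simp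
next
  fix \<eta> assume "\<eta> \<in> (\<lambda>(j, y). \<theta>(j \<mapsto> y)) ` (({1..n} - dom \<theta>) \<times> UNIV)"
  then obtain j y where j: "j \<in> {1..n}" "j \<notin> dom \<theta>" and \<eta>: "\<eta> = \<theta>(j \<mapsto> y)"
    by (elim imageE SigmaE DiffE) (simp only: prod.case, blast)
  have "\<eta> \<in> Theta n (k + 1)"
    using \<theta> j finite_dom_Theta[OF \<theta>] by (simp add: \<eta> Theta_def)
  moreover have "\<theta> \<subseteq>\<^sub>m \<eta>"
    using j by (simp add: \<eta> map_le_def)
  ultimately show "\<eta> \<in> {\<eta>\<in>Theta n (k + 1). \<theta> \<subseteq>\<^sub>m \<eta>}"
    by simp
qed

lemma fun_upd_outside_dom_eq_iff:
  assumes "j \<notin> dom \<theta>"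
  shows "\<theta>(j \<mapsto> y) = \<theta>(j' \<mapsto> y') \<longleftrightarrow> j = j' \<and> y = y'"
proof
  assume eq: "\<theta>(j \<mapsto> y) = \<theta>(j' \<mapsto> y')"
  have "(\<theta>(j' \<mapsto> y')) j = Some y"
    by (simp flip: eq)
  with assms have "j = j'"
    by (auto split: if_splits)
  with eq show "j = j' \<and> y = y'"
    by (metis fun_upd_same option.inject)
qed simp

section \<open>The operator \<open>D D*\<close> on functions supported on \<open>Y\<^sup>A\<close>\<close>

definition supported_on :: "nat set \<Rightarrow> ((nat \<rightharpoonup> 'y) \<Rightarrow> real) \<Rightarrow> bool" where
  "supported_on A F \<longleftrightarrow> (\<forall>\<phi>. dom \<phi> \<noteq> A \<longrightarrow> F \<phi> = 0)"

lemma Dstar_supported: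
  fixes F :: "(nat \<rightharpoonup> 'y::finite) \<Rightarrow> real"
  assumes A: "A \<subseteq> {1..n}" "card A = k" and supp: "supported_on A F"
  shows "Dstar n (k + 1) F \<eta> = (if A \<subseteq> dom \<eta> then F (\<eta> |` A) else 0)"
proof -
  let ?S = "{\<phi>\<in>Theta n k. \<phi> \<subseteq>\<^sub>m \<eta>}"
  have "finite ?S"
    using finite_Theta by (rule rev_finite_subset) auto
  have restrict: "\<phi> = \<eta> |` A" if "\<phi> \<subseteq>\<^sub>m \<eta>" "dom \<phi> = A" for \<phi>
  proof
    fix x show "\<phi> x = (\<eta> |` A) x"
      using that unfolding map_le_def restrict_map_def by (cases "x \<in> A") auto
  qed
  have "Dstar n (k + 1) F \<eta> = (\<Sum>\<phi>\<in>?S. F \<phi>)"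
    by (simp add: Dstar_def)
  also have "\<dots> = (\<Sum>\<phi>\<in>?S. if \<phi> = \<eta> |` A then F \<phi> else 0)"
  proof (intro sum.cong refl)
    fix \<phi> assume "\<phi> \<in> ?S"
    then have "\<phi> \<noteq> \<eta> |` A \<Longrightarrow> dom \<phi> \<noteq> A"
      using restrict by blast
    then show "F \<phi> = (if \<phi> = \<eta> |` A then F \<phi> else 0)"
      using supp by (auto simp: supported_on_def)
  qed
  also have "\<dots> = (if \<eta> |` A \<in> ?S then F (\<eta> |` A) else 0)"
    using \<open>finite ?S\<close> by (simp add: sum.delta)
  also have "\<dots> = (if A \<subseteq> dom \<eta> then F (\<eta> |` A) else 0)"
  proof (cases "A \<subseteq> dom \<eta>")
    case True
    then have "dom (\<eta> |` A) = A"
      by auto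
    with A have "\<eta> |` A \<in> ?S"
      by (auto simp: Theta_def map_le_def)
    with True show ?thesis by simp
  next
    case False
    then have "dom (\<eta> |` A) \<noteq> A"
      by auto
    with False supp show ?thesis
      by (simp add: supported_on_def)
  qed
  finally show ?thesis .
qed

lemma D_Dstar_supported:
  fixes F :: "(nat \<rightharpoonup> 'y::finite) \<Rightarrow> real"
  assumes \<theta>: "\<theta> \<in> Theta n k" and A: "A \<subseteq> {1..n}" "card A = k"
    and supp: "supported_on A F"
  shows "D n (k + 1) (Dstar n (k + 1) F) \<theta>
    = (\<Sum>(j, y)\<in>({1..n} - dom \<theta>) \<times> UNIV.
         if A \<subseteq> insert j (dom \<theta>) then F ((\<theta>(j \<mapsto> y)) |` A) else 0)"
proof -
  have inj: "inj_on (\<lambda>(j, y). \<theta>(j \<mapsto> y)) (({1..n} - dom \<theta>) \<times> UNIV)"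
    unfolding inj_on_def by (auto simp: fun_upd_outside_dom_eq_iff)
  have "D n (k + 1) (Dstar n (k + 1) F) \<theta>
      = (\<Sum>\<eta>\<in>{\<eta>\<in>Theta n (k + 1). \<theta> \<subseteq>\<^sub>m \<eta>}. if A \<subseteq> dom \<eta> then F (\<eta> |` A) else 0)"
    unfolding D_def by (intro sum.cong refl Dstar_supported[OF A supp])
  then show ?thesis
    unfolding Theta_Suc_supersets[OF \<theta>] sum.reindex[OF inj] by (auto intro: sum.cong)
qed

lemma D_Dstar_dom_eq:
  fixes F :: "(nat \<rightharpoonup> 'y::finite) \<Rightarrow> real"
  assumes \<theta>: "\<theta> \<in> Theta n k" and A: "A \<subseteq> {1..n}" "card A = k"
    and supp: "supported_on A F" and dom: "dom \<theta> = A"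
  shows "D n (k + 1) (Dstar n (k + 1) F) \<theta> = real (card (UNIV :: 'y set)) * real (n - k) * F \<theta>"
proof -
  have restrict: "\<theta> |` A = \<theta>"
    using dom by (auto simp: restrict_map_def fun_eq_iff domIff)
  have "D n (k + 1) (Dstar n (k + 1) F) \<theta> = (\<Sum>(j, y)\<in>({1..n} - A) \<times> (UNIV :: 'y set). F \<theta>)"
    unfolding D_Dstar_supported[OF \<theta> A supp] dom
    by (intro sum.cong refl) (auto simp: restrict)
  also have "\<dots> = real (card (UNIV :: 'y set)) * real (n - k) * F \<theta>"
    using A by (simp add: card_cartesian_product card_Diff_subset finite_subset)
  finally show ?thesis .
qed

lemma D_Dstar_missing_one:
  fixes F :: "(nat \<rightharpoonup> 'y::finite) \<Rightarrow> real"
  assumes \<theta>: "\<theta> \<in> Theta n k" and A: "A \<subseteq> {1..n}" "card A = k"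
    and supp: "supported_on A F" and i: "A - dom \<theta> = {i}"
  shows "D n (k + 1) (Dstar n (k + 1) F) \<theta> = (\<Sum>y\<in>UNIV. F ((\<theta>(i \<mapsto> y)) |` A))"
proof -
  have "i \<in> {1..n} - dom \<theta>"
    using i A by auto
  moreover have "A \<subseteq> insert j (dom \<theta>) \<longleftrightarrow> j = i" for j
    using i by auto
  ultimately have "(\<Sum>(j, y)\<in>({1..n} - dom \<theta>) \<times> UNIV.
         if A \<subseteq> insert j (dom \<theta>) then F ((\<theta>(j \<mapsto> y)) |` A) else 0)
    = (\<Sum>j\<in>{1..n} - dom \<theta>. if j = i then \<Sum>y\<in>UNIV. F ((\<theta>(j \<mapsto> y)) |` A) else 0)"
    unfolding sum.cartesian_product[symmetric] by (intro sum.cong refl) auto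
  also have "\<dots> = (\<Sum>y\<in>UNIV. F ((\<theta>(i \<mapsto> y)) |` A))"
    using \<open>i \<in> {1..n} - dom \<theta>\<close> by (simp add: sum.delta)
  finally show ?thesis
    unfolding D_Dstar_supported[OF \<theta> A supp] .
qed

lemma D_Dstar_missing_two:
  fixes F :: "(nat \<rightharpoonup> 'y::finite) \<Rightarrow> real"
  assumes \<theta>: "\<theta> \<in> Theta n k" and A: "A \<subseteq> {1..n}" "card A = k"
    and supp: "supported_on A F" and two: "2 \<le> card (A - dom \<theta>)"
  shows "D n (k + 1) (Dstar n (k + 1) F) \<theta> = 0"
proof -
  have "\<not> A \<subseteq> insert j (dom \<theta>)" for j
  proof
    assume "A \<subseteq> insert j (dom \<theta>)"
    then have "card (A - dom \<theta>) \<le> card {j}"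
      by (intro card_mono) auto
    with two show False by simp
  qed
  then show ?thesis
    unfolding D_Dstar_supported[OF \<theta> A supp] by simp
qed

lemma Theta_relative_position_cases:
  assumes \<theta>: "\<theta> \<in> Theta n k" and "finite A" "card A = k"
  obtains "dom \<theta> = A"
    | i i0 where "A - dom \<theta> = {i}" "dom \<theta> - A = {i0}" "card (dom \<theta> \<inter> A) = k - 1"
    | "2 \<le> card (A - dom \<theta>)" "card (dom \<theta> \<inter> A) \<noteq> k - 1"
proof -
  define r where "r = card (A - dom \<theta>)"
  have fin: "finite (dom \<theta>)" and card_dom: "card (dom \<theta>) = k"
    using \<theta> finite_dom_Theta by (auto simp: Theta_def)
  have r: "card (dom \<theta> - A) = r" "card (dom \<theta> \<inter> A) = k - r" "r \<le> k"
    using assms fin card_dom card_Diff_subset_Int[of A "dom \<theta>"] card_Diff_subset_Int[of "dom \<theta>" A]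
    by (auto simp: r_def Int_commute card_mono)
  consider "r = 0" | "r = 1" | "2 \<le> r" by linarith
  then show ?thesis
  proof cases
    case 1
    then have "card (dom \<theta> - A) = 0"
      using r(1) by simp
    then have "A - dom \<theta> = {}" "dom \<theta> - A = {}"
      using 1 assms(2) fin by (simp_all add: r_def)
    then show ?thesis using that(1) by blast
  next
    case 2
    then show ?thesis
      using that(2) r by (auto simp: r_def card_1_singleton_iff)
  next
    case 3
    then show ?thesis
      using that(3) r by (simp add: r_def)
  qed
qed

section \<open>Fundamental functions\<close>

lemma tensor_eq_factor_mult_prod:
  assumes "finite A" "i \<in> A" "dom \<psi> = A" "\<psi> i = Some y" "\<forall>j\<in>A - {i}. \<psi> j = \<theta> j"
  shows "tensor A G \<psi> = G i y * (\<Prod>j\<in>A - {i}. G j (the (\<theta> j)))"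
proof -
  have "tensor A G \<psi> = G i (the (\<psi> i)) * (\<Prod>j\<in>A - {i}. G j (the (\<psi> j)))"
    using assms(3) by (simp add: tensor_def prod.remove[OF assms(1,2)])
  also have "\<dots> = G i y * (\<Prod>j\<in>A - {i}. G j (the (\<theta> j)))"
    using assms(4,5) by (auto intro!: prod.cong)
  finally show ?thesis .
qed

lemma sum_tensor_fun_upd_eq_Qk:
  fixes Q :: "'y::finite \<Rightarrow> 'y \<Rightarrow> real"
  assumes sym: "\<forall>x y. Q x y = Q y x" and st: "stochastic Q" and irr: "irreducible_mat Q"
    and eig: "eigen_enum Q lam m" and fund: "fundamental Q lam m A b G" and "finite A"
    and i: "A - dom \<theta> = {i}" and i0: "dom \<theta> - A = {i0}" and card: "card (dom \<theta> \<inter> A) = k - 1"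
  shows "(\<Sum>y\<in>UNIV. tensor A G ((\<theta>(i \<mapsto> y)) |` A)) = Qk Q lam k A G \<theta>"
proof -
  define P where "P = (\<Prod>j\<in>A - {i}. G j (the (\<theta> j)))"
  have "i \<in> A"
    using i by blast
  have upd: "tensor A G ((\<theta>(i \<mapsto> y)) |` A) = G i y * P" for y
    unfolding P_def using i by (intro tensor_eq_factor_mult_prod[OF \<open>finite A\<close> \<open>i \<in> A\<close>]) auto
  have bar: "tensor A G ((\<theta> |` (A - {i}))(i \<mapsto> the (\<theta> i0))) = G i (the (\<theta> i0)) * P"
    unfolding P_def using i by (intro tensor_eq_factor_mult_prod[OF \<open>finite A\<close> \<open>i \<in> A\<close>]) auto
  obtain l where "l \<le> m" "G i \<in> eigsp Q lam l"
    using fund \<open>i \<in> A\<close> unfolding fundamental_def by blast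
  then have sum_G: "(\<Sum>y\<in>UNIV. G i y)
      = (if G i \<in> eigsp Q lam 0 then real (card (UNIV :: 'y set)) * G i (the (\<theta> i0)) else 0)"
    by (rule sum_eigsp[OF sym st irr eig])
  have "(\<Sum>y\<in>UNIV. tensor A G ((\<theta>(i \<mapsto> y)) |` A)) = (\<Sum>y\<in>UNIV. G i y) * P"
    unfolding upd by (rule sum_distrib_right[symmetric])
  also have "\<dots> = Qk Q lam k A G \<theta>"
    using card i i0 by (simp add: sum_G bar Qk_def Let_def)
  finally show ?thesis .
qed

lemma sum_combination_fun_upd_eq_Qk:
  fixes Q :: "'y::finite \<Rightarrow> 'y \<Rightarrow> real"
  assumes sym: "\<forall>x y. Q x y = Q y x" and st: "stochastic Q" and irr: "irreducible_mat Q"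
    and eig: "eigen_enum Q lam m" and fund: "\<forall>t\<in>T. fundamental Q lam m A (b t) (G t)"
    and "finite A" and "A - dom \<theta> = {i}" "dom \<theta> - A = {i0}" "card (dom \<theta> \<inter> A) = k - 1"
  shows "(\<Sum>y\<in>UNIV. \<Sum>t\<in>T. c t * tensor A (G t) ((\<theta>(i \<mapsto> y)) |` A))
    = (\<Sum>t\<in>T. c t * Qk Q lam k A (G t) \<theta>)"
proof -
  have "(\<Sum>y\<in>UNIV. \<Sum>t\<in>T. c t * tensor A (G t) ((\<theta>(i \<mapsto> y)) |` A))
      = (\<Sum>t\<in>T. c t * (\<Sum>y\<in>UNIV. tensor A (G t) ((\<theta>(i \<mapsto> y)) |` A)))"
    by (subst sum.swap) (simp add: sum_distrib_left)
  also have "\<dots> = (\<Sum>t\<in>T. c t * Qk Q lam k A (G t) \<theta>)"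
  proof (intro sum.cong refl)
    fix t assume "t \<in> T"
    with fund have "fundamental Q lam m A (b t) (G t)"
      by blast
    then show "c t * (\<Sum>y\<in>UNIV. tensor A (G t) ((\<theta>(i \<mapsto> y)) |` A)) = c t * Qk Q lam k A (G t) \<theta>"
      by (simp only: sum_tensor_fun_upd_eq_Qk[OF sym st irr eig _ assms(6-9)])
  qed
  finally show ?thesis .
qed

lemma Qk_eq_0: "card (dom \<theta> \<inter> A) \<noteq> k - 1 \<Longrightarrow> Qk Q lam k A G \<theta> = 0"
  by (simp add: Qk_def)

theorem lemma7p5:
  fixes Q :: "'y::finite \<Rightarrow> 'y \<Rightarrow> real" and lam :: "nat \<Rightarrow> real"
    and m n k :: nat and a :: "nat \<Rightarrow> nat" and A :: "nat set"
    and T :: "'t set" and c :: "'t \<Rightarrow> real" and G :: "'t \<Rightarrow> nat \<Rightarrow> 'y \<Rightarrow> real"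
    and F :: "(nat \<rightharpoonup> 'y) \<Rightarrow> real"
  assumes symQ: "\<forall>x y. Q x y = Q y x"
    and stochQ: "stochastic Q"
    and irrQ: "irreducible_mat Q"
    and eig: "eigen_enum Q lam m"
    and k1: "1 \<le> k" and kn: "k \<le> n - 1"
    and asum: "(\<Sum>i\<le>m. a i) = k + 1" and a0: "1 \<le> a 0"
    and AX: "A \<subseteq> {1..n}" and cardA: "card A = k"
    and finT: "finite T"
    and fund: "\<forall>t\<in>T. fundamental Q lam m A (a(0 := a 0 - 1)) (G t)"
    and Fdef: "F = (\<lambda>\<theta>. \<Sum>t\<in>T. c t * tensor A (G t) \<theta>)"
  shows "\<forall>\<theta>\<in>Theta n k. D n (k + 1) (Dstar n (k + 1) F) \<theta>
           = real (card (UNIV :: 'y set)) * real (n - k) * F \<theta>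
             + (\<Sum>t\<in>T. c t * Qk Q lam k A (G t) \<theta>)"
proof
  fix \<theta> :: "nat \<rightharpoonup> 'y" assume \<theta>: "\<theta> \<in> Theta n k"
  have "finite A"
    using AX by (rule finite_subset) simp
  have supp: "supported_on A F"
    by (simp add: Fdef supported_on_def tensor_def)
  then have F\<theta>: "F \<theta> = 0" if "dom \<theta> \<noteq> A"
    using that by (simp add: supported_on_def)
  from \<theta> \<open>finite A\<close> cardA show "D n (k + 1) (Dstar n (k + 1) F) \<theta>
      = real (card (UNIV :: 'y set)) * real (n - k) * F \<theta> + (\<Sum>t\<in>T. c t * Qk Q lam k A (G t) \<theta>)"
  proof (cases rule: Theta_relative_position_cases)
    case 1
    with k1 cardA have "card (dom \<theta> \<inter> A) \<noteq> k - 1"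
      by simp
    then show ?thesis
      using D_Dstar_dom_eq[OF \<theta> AX cardA supp 1] by (simp add: Qk_eq_0)
  next
    case (2 i i0)
    then have "D n (k + 1) (Dstar n (k + 1) F) \<theta> = (\<Sum>t\<in>T. c t * Qk Q lam k A (G t) \<theta>)"
      unfolding D_Dstar_missing_one[OF \<theta> AX cardA supp 2(1)] unfolding Fdef
      by (intro sum_combination_fun_upd_eq_Qk[OF symQ stochQ irrQ eig fund \<open>finite A\<close>])
    then show ?thesis
      using 2(1) F\<theta> by auto
  next
    case 3
    then have "dom \<theta> \<noteq> A"
      by auto
    with 3 show ?thesis
      using D_Dstar_missing_two[OF \<theta> AX cardA supp 3(1)] F\<theta> by (simp add: Qk_eq_0)
  qed
qed

end
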